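(* Let $T\colon R^{p,0}_\omega\to R^{p,0}_\omega$ be a bounded linear operator, let $M,N\in\mathbb N$ with $M>N$ and $\mathcal B\subseteq\mathcal D^N$. On $\{-1,1\}^{\mathcal B}$ with the uniform probability, let $b(\theta)=\sum_{K\in\mathcal B}\theta_Kh^M_K$ and $Z(\theta)=\langle b(\theta),Tb(\theta)\rangle-\sum_{K\in\mathcal B}\langle h^M_K,Th^M_K\rangle$. Then $\mathbb E(Z)=0$ and $\mathrm{Var}(Z)\le2\|T\|^2\,|\bigcup\mathcal B|^{1/p+1}\,2^{-N/q}$, where $|\bigcup\mathcal B|$ is the Lebesgue measure of the union of the intervals in $\mathcal B$.
   Context: Fix $1<p<\infty$, $q=p/(p-1)$, $p^*=\max\{p,q\}$. All $L_r$ spaces are over $[0,1]$ with Lebesgue measure and $\langle g,f\rangle=\int_0^1gf$. A dyadic interval is $[(i-1)2^{-n},i2^{-n})$, $n\ge0$, $1\le i\le2^n$; $\mathcal D^n$ is the set of those of length $2^{-n}$ and $\mathcal D_n=\bigcup_{k=0}^n\mathcal D^k$. For a dyadic interval $I$, $I^+,I^-$ are its left and right halves and $h_I=\chi_{I^+}-\chi_{I^-}$. For each $n\in\mathbb N$ a family $(h^n_I)_{I\in\mathcal D_{n-1}}$ in $L_p$ is fixed with the same joint distribution as $(h_I)_{I\in\mathcal D_{n-1}}$, such that the $\sigma$-algebras $\sigma(h^n_I:I\in\mathcal D_{n-1})$, $n\in\mathbb N$, are independent. Let $\mathcal D_\omega=\{(n,I):n\in\mathbb N,I\in\mathcal D_{n-1}\}$,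 linearly ordered by $(m,J)\prec(n,I)$ iff $m<n$, or $m=n$ and $J$ precedes $I$ in $\mathcal D_{m-1}$ (intervals ordered first by level, coarser first, then from left to right). $R^{p,0}_\omega$ is the closed linear span of $\{h^n_I:(n,I)\in\mathcal D_\omega\}$ in $L_p$ (a distributional copy of the mean-zero hyperplane of the Bourgain–Rosenthal–Schechtman space $R^p_\omega$); $(h^n_I)_{(n,I)\in\mathcal D_\omega}$, in the order $\prec$, is an unconditional basis of it. *)

theory Defs
  imports "HOL-Probability.Probability"
begin

definition lmeas :: "real measure" where
  "lmeas = lebesgue_on {0..1}"

text \<open>Dyadic intervals are encoded as pairs (n,i) with 1 \<le> i \<le> 2^n, standing for
  [(i-1) 2^-n, i 2^-n).\<close>
definition dyadic_level :: "nat \<Rightarrow> (nat \<times> nat) set" where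
  "dyadic_level n = {(n, i) | i. 1 \<le> i \<and> i \<le> 2 ^ n}"

definition dyadic_upto :: "nat \<Rightarrow> (nat \<times> nat) set" where
  "dyadic_upto n = (\<Union>k\<le>n. dyadic_level k)"

definition dyint :: "nat \<times> nat \<Rightarrow> real set" where
  "dyint I = {(real (snd I) - 1) / 2 ^ fst I ..< real (snd I) / 2 ^ fst I}"

definition dyint_left :: "nat \<times> nat \<Rightarrow> real set" where
  "dyint_left I = {(real (snd I) - 1) / 2 ^ fst I ..< (2 * real (snd I) - 1) / 2 ^ (fst I + 1)}"

definition dyint_right :: "nat \<times> nat \<Rightarrow> real set" where
  "dyint_right I = {(2 * real (snd I) - 1) / 2 ^ (fst I + 1) ..< real (snd I) / 2 ^ fst I}"

definition haar :: "nat \<times> nat \<Rightarrow> real \<Rightarrow> real" where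
  "haar I x = indicator (dyint_left I) x - indicator (dyint_right I) x"

definition Lp_norm :: "real \<Rightarrow> (real \<Rightarrow> real) \<Rightarrow> real" where
  "Lp_norm p f = (\<integral>x. \<bar>f x\<bar> powr p \<partial>lmeas) powr (1 / p)"

definition in_Lp :: "real \<Rightarrow> (real \<Rightarrow> real) \<Rightarrow> bool" where
  "in_Lp p f \<longleftrightarrow> f \<in> borel_measurable lmeas \<and> integrable lmeas (\<lambda>x. \<bar>f x\<bar> powr p)"

definition pairing :: "(real \<Rightarrow> real) \<Rightarrow> (real \<Rightarrow> real) \<Rightarrow> real" where
  "pairing g f = (\<integral>x. g x * f x \<partial>lmeas)"

definition D_omega :: "(nat \<times> (nat \<times> nat)) set" where
  "D_omega = {(n, I) | n I. 1 \<le> n \<and> I \<in> dyadic_upto (n - 1)}"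

definition haar_copies :: "(nat \<Rightarrow> nat \<times> nat \<Rightarrow> real \<Rightarrow> real) \<Rightarrow> bool" where
  "haar_copies hh \<longleftrightarrow>
     (\<forall>n\<ge>1. \<forall>I\<in>dyadic_upto (n - 1). hh n I \<in> borel_measurable lmeas) \<and>
     (\<forall>n\<ge>1. distr lmeas (PiM (dyadic_upto (n - 1)) (\<lambda>_. borel))
                 (\<lambda>x. \<lambda>I\<in>dyadic_upto (n - 1). hh n I x)
            = distr lmeas (PiM (dyadic_upto (n - 1)) (\<lambda>_. borel))
                 (\<lambda>x. \<lambda>I\<in>dyadic_upto (n - 1). haar I x)) \<and>
     prob_space.indep_vars lmeas (\<lambda>n. PiM (dyadic_upto (n - 1)) (\<lambda>_. borel))
        (\<lambda>n x. \<lambda>I\<in>dyadic_upto (n - 1). hh n I x) {1..}"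

definition lin_span_hh :: "(nat \<Rightarrow> nat \<times> nat \<Rightarrow> real \<Rightarrow> real) \<Rightarrow> (real \<Rightarrow> real) set" where
  "lin_span_hh hh = {(\<lambda>x. \<Sum>j\<in>S. c j * hh (fst j) (snd j) x) | S c. finite S \<and> S \<subseteq> D_omega}"

definition Rp0 :: "real \<Rightarrow> (nat \<Rightarrow> nat \<times> nat \<Rightarrow> real \<Rightarrow> real) \<Rightarrow> (real \<Rightarrow> real) set" where
  "Rp0 p hh = {f. in_Lp p f \<and>
      (\<forall>e>0. \<exists>g\<in>lin_span_hh hh. Lp_norm p (\<lambda>x. f x - g x) < e)}"

definition bounded_linear_on :: "real \<Rightarrow> (real \<Rightarrow> real) set \<Rightarrow> ((real \<Rightarrow> real) \<Rightarrow> (real \<Rightarrow> real)) \<Rightarrow> bool" where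
  "bounded_linear_on p X T \<longleftrightarrow>
     (\<forall>f\<in>X. T f \<in> X) \<and>
     (\<forall>f\<in>X. \<forall>g\<in>X. \<forall>a b::real. T (\<lambda>x. a * f x + b * g x) = (\<lambda>x. a * T f x + b * T g x)) \<and>
     (\<exists>C. \<forall>f\<in>X. Lp_norm p (T f) \<le> C * Lp_norm p f)"

definition op_norm :: "real \<Rightarrow> (real \<Rightarrow> real) set \<Rightarrow> ((real \<Rightarrow> real) \<Rightarrow> (real \<Rightarrow> real)) \<Rightarrow> real" where
  "op_norm p X T = Sup {Lp_norm p (T f) | f. f \<in> X \<and> Lp_norm p f \<le> 1}"

definition sign_avg :: "(nat \<times> nat) set \<Rightarrow> ((nat \<times> nat \<Rightarrow> real) \<Rightarrow> real) \<Rightarrow> real" where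
  "sign_avg B Z = (\<Sum>\<theta>\<in>B \<rightarrow>\<^sub>E {-1, 1}. Z \<theta>) / real (card (B \<rightarrow>\<^sub>E ({-1, 1} :: real set)))"

definition sign_var :: "(nat \<times> nat) set \<Rightarrow> ((nat \<times> nat \<Rightarrow> real) \<Rightarrow> real) \<Rightarrow> real" where
  "sign_var B Z = sign_avg B (\<lambda>\<theta>. (Z \<theta> - sign_avg B Z)\<^sup>2)"

end

theory Submission
  imports Defs
begin

text \<open>Expanding the bilinear form, Z is a Rademacher chaos of order two,
  Z(\<theta>) = \<Sum>_{K \<noteq> L} \<theta>_K \<theta>_L a_KL with a_KL = <h^M_K, T h^M_L>, so E Z = 0 and
  Var Z \<le> 2 \<Sum> a_KL^2. Since the h^M_K are distributed like Haar functions, a \<plusminus>1 combination of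
  r of them has |.|^s integrating to r 2^-N for every s > 0. By Hoelder, every entry is then at
  most ||T|| 2^-N, and choosing the signs of a row shows that every row sum \<Sum>_L |a_KL| is at most
  ||T|| 2^(-N/q) |\<Union>B|^(1/p). Hence \<Sum> a_KL^2 \<le> |B| ||T|| 2^-N ||T|| 2^(-N/q) |\<Union>B|^(1/p),
  which is the claimed bound because |\<Union>B| = |B| 2^-N.\<close>

section \<open>Dyadic intervals and Haar functions\<close>

lemma borel_measurable_lmeas: "f \<in> borel_measurable borel \<Longrightarrow> f \<in> borel_measurable lmeas"
  using measurable_comp[OF id_borel_measurable_lebesgue_on[of "{0..1}"], of f borel]
  unfolding lmeas_def by simp

lemma finite_measure_lmeas: "finite_measure lmeas"
  unfolding lmeas_def by (rule finite_measure_lebesgue_on) auto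

lemma lmeas_indicator:
  assumes "A \<in> sets borel" "A \<subseteq> {0..1}"
  shows "integrable lmeas (indicator A :: real \<Rightarrow> real)"
    and "integral\<^sup>L lmeas (indicator A) = measure lborel A"
proof -
  have A: "A \<in> sets lmeas"
    using assms unfolding lmeas_def by (auto simp: sets_restrict_space_iff)
  show "integrable lmeas (indicator A :: real \<Rightarrow> real)"
    using A finite_measure_lmeas by (intro integrable_real_indicator) (simp_all add: finite_measure.emeasure_finite less_top[symmetric])
  show "integral\<^sup>L lmeas (indicator A) = measure lborel A"
    using assms unfolding lmeas_def
    by (simp add: measure_restrict_space measure_completion Int_absorb2)
qed

lemma abs_haar: "\<bar>haar K x\<bar> = indicator (dyint K) x"
proof -
  obtain n i where K: "K = (n, i)" by force
  have "(2::real) ^ (n + 1) = 2 * 2 ^ n" by simp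
  then show ?thesis
    unfolding K haar_def dyint_def dyint_left_def dyint_right_def
    by (auto simp: indicator_def field_simps)
qed

lemma haar_eq_0: "x \<notin> dyint K \<Longrightarrow> haar K x = 0"
  using abs_haar[of K x] by simp

lemma borel_measurable_haar [measurable]: "haar K \<in> borel_measurable borel"
  unfolding haar_def dyint_left_def dyint_right_def by measurable

lemma dyint_borel [measurable]: "dyint K \<in> sets borel"
  unfolding dyint_def by simp

lemma emeasure_dyint: "emeasure lborel (dyint K) = ennreal (1 / 2 ^ fst K)"
proof -
  have "(real (snd K) - 1) / 2 ^ fst K \<le> real (snd K) / 2 ^ fst K"
    by (simp add: divide_right_mono)
  then show ?thesis
    unfolding dyint_def by (simp add: diff_divide_distrib)
qed

lemma finite_dyadic_level: "finite (dyadic_level N)"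
proof (rule finite_subset)
  show "dyadic_level N \<subseteq> (\<lambda>i. (N, i)) ` {1..2 ^ N}"
    by (auto simp: dyadic_level_def)
qed simp

lemma dyint_level_subset_unit:
  assumes "K \<in> dyadic_level N"
  shows "dyint K \<subseteq> {0..1}"
proof
  fix x assume x: "x \<in> dyint K"
  obtain i where K: "K = (N, i)" "1 \<le> i" "real i \<le> 2 ^ N"
    using assms by (auto simp: dyadic_level_def simp flip: of_nat_le_iff)
  have "real i - 1 \<le> x * 2 ^ N" "x * 2 ^ N < real i"
    using x unfolding K dyint_def by (auto simp: field_simps)
  then have "0 \<le> x * 2 ^ N" "x * 2 ^ N \<le> 1 * 2 ^ N"
    using K by linarith+
  moreover have "(0::real) < 2 ^ N"
    by simp
  ultimately show "x \<in> {0..1}"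
    by (simp add: zero_le_mult_iff mult_le_cancel_right)
qed

lemma dyint_level_disjoint:
  assumes "K \<in> dyadic_level N" "L \<in> dyadic_level N" "x \<in> dyint K" "x \<in> dyint L"
  shows "K = L"
proof -
  obtain i j where K: "K = (N, i)" and L: "L = (N, j)"
    using assms(1,2) by (auto simp: dyadic_level_def)
  have "real i - 1 \<le> x * 2 ^ N" "x * 2 ^ N < real i" "real j - 1 \<le> x * 2 ^ N" "x * 2 ^ N < real j"
    using assms(3,4) unfolding K L dyint_def by (auto simp: field_simps)
  then have "i = j" by linarith
  then show ?thesis
    unfolding K L by simp
qed

lemma measure_UN_dyint:
  assumes "S \<subseteq> dyadic_level N"
  shows "measure lborel (\<Union>K\<in>S. dyint K) = real (card S) / 2 ^ N"
proof -
  have fin: "finite S"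
    using assms finite_dyadic_level by (rule finite_subset)
  have "measure lborel (\<Union>K\<in>S. dyint K) = (\<Sum>K\<in>S. measure lborel (dyint K))"
  proof (rule measure_finite_Union)
    show "disjoint_family_on dyint S"
      unfolding disjoint_family_on_def using assms dyint_level_disjoint by blast
  qed (use fin in \<open>auto simp: emeasure_dyint\<close>)
  also have "\<dots> = (\<Sum>K\<in>S. 1 / 2 ^ N)"
    using assms by (intro sum.cong) (auto simp: measure_def emeasure_dyint dyadic_level_def)
  finally show ?thesis by simp
qed

lemma abs_sum_signed_haar_powr:
  assumes S: "S \<subseteq> dyadic_level N" and \<epsilon>: "\<And>K. K \<in> S \<Longrightarrow> \<bar>\<epsilon> K\<bar> = 1" and r: "r > 0"
  shows "\<bar>\<Sum>K\<in>S. \<epsilon> K * haar K x\<bar> powr r = indicator (\<Union>K\<in>S. dyint K) x"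
proof (cases "x \<in> (\<Union>K\<in>S. dyint K)")
  case True
  then obtain K0 where K0: "K0 \<in> S" "x \<in> dyint K0" by blast
  have fin: "finite S"
    using S finite_dyadic_level by (rule finite_subset)
  have "(\<Sum>K\<in>S. \<epsilon> K * haar K x) = \<epsilon> K0 * haar K0 x + (\<Sum>K\<in>S - {K0}. \<epsilon> K * haar K x)"
    using fin K0(1) by (rule sum.remove)
  also have "(\<Sum>K\<in>S - {K0}. \<epsilon> K * haar K x) = 0"
    using S K0 dyint_level_disjoint[of _ N K0 x] by (intro sum.neutral) (metis DiffE insertCI subsetD haar_eq_0 mult_zero_right)
  finally show ?thesis
    using True K0 \<epsilon> r by (simp add: abs_mult abs_haar)
next
  case False
  then have "(\<Sum>K\<in>S. \<epsilon> K * haar K x) = 0"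
    by (intro sum.neutral) (auto simp: haar_eq_0)
  then show ?thesis
    using False by simp
qed

lemma abs_sum_haar_le: "\<bar>\<Sum>K\<in>S. c K * haar K x\<bar> \<le> (\<Sum>K\<in>S. \<bar>c K\<bar>)"
proof -
  have "\<bar>\<Sum>K\<in>S. c K * haar K x\<bar> \<le> (\<Sum>K\<in>S. \<bar>c K * haar K x\<bar>)"
    by (rule sum_abs)
  also have "\<dots> \<le> (\<Sum>K\<in>S. \<bar>c K\<bar>)"
    by (intro sum_mono) (simp add: abs_mult abs_haar mult_left_le indicator_def)
  finally show ?thesis .
qed

section \<open>Hoelder's inequality\<close>

lemma Holder_inequality:
  fixes f g :: "'a \<Rightarrow> real"
  assumes p: "p > 1" and q: "q > 1" and pq: "1 / p + 1 / q = 1"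
    and fm: "f \<in> borel_measurable M" and gm: "g \<in> borel_measurable M"
    and fi: "integrable M (\<lambda>x. \<bar>f x\<bar> powr p)" and gi: "integrable M (\<lambda>x. \<bar>g x\<bar> powr q)"
  shows "integrable M (\<lambda>x. f x * g x)"
    and "\<bar>\<integral>x. f x * g x \<partial>M\<bar> \<le> (\<integral>x. \<bar>f x\<bar> powr p \<partial>M) powr (1 / p) * (\<integral>x. \<bar>g x\<bar> powr q \<partial>M) powr (1 / q)"
proof -
  have young: "a * b \<le> a powr p / p + b powr q / q" if "a \<ge> 0" "b \<ge> 0" for a b :: real
    using Youngs_inequality[OF p q pq that] .
  show int: "integrable M (\<lambda>x. f x * g x)"
  proof (rule Bochner_Integration.integrable_bound)
    show "integrable M (\<lambda>x. \<bar>f x\<bar> powr p / p + \<bar>g x\<bar> powr q / q)"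
      using fi gi by simp
    show "AE x in M. norm (f x * g x) \<le> norm (\<bar>f x\<bar> powr p / p + \<bar>g x\<bar> powr q / q)"
      using young p q by (auto simp: abs_mult)
  qed (use fm gm in measurable)
  define F where "F = (\<integral>x. \<bar>f x\<bar> powr p \<partial>M)"
  define G where "G = (\<integral>x. \<bar>g x\<bar> powr q \<partial>M)"
  have "F \<ge> 0" "G \<ge> 0"
    unfolding F_def G_def by (auto intro: integral_nonneg_AE)
  \<comment> \<open>Normalising by F + d and G + d instead of F and G avoids dividing by zero; then d \<rightarrow> 0.\<close>
  have approx: "\<bar>\<integral>x. f x * g x \<partial>M\<bar> \<le> (F + d) powr (1 / p) * (G + d) powr (1 / q)" if d: "d > 0" for d
  proof -
    define A where "A = (F + d) powr (1 / p)"
    define A' where "A' = (G + d) powr (1 / q)"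
    have A: "A > 0" "A powr p = F + d" and A': "A' > 0" "A' powr q = G + d"
      using \<open>F \<ge> 0\<close> \<open>G \<ge> 0\<close> d p q by (auto simp: A_def A'_def powr_powr)
    have pointwise: "\<bar>f x * g x\<bar> \<le> A * A' * (\<bar>f x\<bar> powr p / (p * (F + d)) + \<bar>g x\<bar> powr q / (q * (G + d)))" for x
    proof -
      have "(\<bar>f x\<bar> / A) * (\<bar>g x\<bar> / A') \<le> \<bar>f x\<bar> powr p / (p * (F + d)) + \<bar>g x\<bar> powr q / (q * (G + d))"
        using young[of "\<bar>f x\<bar> / A" "\<bar>g x\<bar> / A'"] A A' by (simp add: powr_divide mult.commute)
      then show ?thesis
        using A(1) A'(1) by (simp add: abs_mult field_simps)
    qed
    have "\<bar>\<integral>x. f x * g x \<partial>M\<bar> \<le> (\<integral>x. \<bar>f x * g x\<bar> \<partial>M)"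
      by (rule integral_abs_bound)
    also have "\<dots> \<le> (\<integral>x. A * A' * (\<bar>f x\<bar> powr p / (p * (F + d)) + \<bar>g x\<bar> powr q / (q * (G + d))) \<partial>M)"
      using pointwise fi gi int by (intro integral_mono) auto
    also have "\<dots> = A * A' * ((1 / p) * (F / (F + d)) + (1 / q) * (G / (G + d)))"
      using fi gi by (simp add: F_def G_def)
    also have "\<dots> \<le> A * A' * ((1 / p) * 1 + (1 / q) * 1)"
      using \<open>F \<ge> 0\<close> \<open>G \<ge> 0\<close> d p q A(1) A'(1)
      by (intro mult_left_mono add_mono) auto
    finally show ?thesis
      using pq by (simp add: A_def A'_def)
  qed
  have lim: "((\<lambda>d. (F + d) powr (1 / p) * (G + d) powr (1 / q)) \<longlongrightarrow> (F + 0) powr (1 / p) * (G + 0) powr (1 / q)) (at_right 0)"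
    using \<open>F \<ge> 0\<close> \<open>G \<ge> 0\<close> p q
    by (intro tendsto_intros tendsto_powr') (auto intro!: eventually_mono[OF eventually_at_right_less])
  have ev: "\<forall>\<^sub>F d in at_right 0. \<bar>\<integral>x. f x * g x \<partial>M\<bar> \<le> (F + d) powr (1 / p) * (G + d) powr (1 / q)"
    using approx eventually_at_right_less[of 0] by (auto elim: eventually_mono)
  have "\<bar>\<integral>x. f x * g x \<partial>M\<bar> \<le> (F + 0) powr (1 / p) * (G + 0) powr (1 / q)"
    by (rule tendsto_le[OF _ lim tendsto_const ev]) simp
  then show "\<bar>\<integral>x. f x * g x \<partial>M\<bar> \<le> F powr (1 / p) * G powr (1 / q)"
    by simp
qed

section \<open>Rademacher chaos of order two\<close>

lemma sum_signs_eq_0_if_flip_odd: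
  fixes f :: "('i \<Rightarrow> real) \<Rightarrow> real"
  assumes K: "K \<in> B" and odd: "\<And>\<theta>. \<theta> \<in> B \<rightarrow>\<^sub>E {-1, 1} \<Longrightarrow> f (\<theta>(K := - \<theta> K)) = - f \<theta>"
  shows "(\<Sum>\<theta>\<in>B \<rightarrow>\<^sub>E {-1, 1}. f \<theta>) = 0"
proof -
  let ?flip = "\<lambda>\<theta>::'i \<Rightarrow> real. \<theta>(K := - \<theta> K)"
  have "bij_betw ?flip (B \<rightarrow>\<^sub>E {-1, 1}) (B \<rightarrow>\<^sub>E {-1, 1})"
    using K by (intro bij_betw_byWitness[where f' = ?flip]) (force simp: PiE_iff extensional_def)+
  then have "(\<Sum>\<theta>\<in>B \<rightarrow>\<^sub>E {-1, 1}. f \<theta>) = (\<Sum>\<theta>\<in>B \<rightarrow>\<^sub>E {-1, 1}. f (?flip \<theta>))"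
    by (rule sum.reindex_bij_betw[symmetric])
  also have "\<dots> = - (\<Sum>\<theta>\<in>B \<rightarrow>\<^sub>E {-1, 1}. f \<theta>)"
    by (simp add: odd sum_negf)
  finally show ?thesis by simp
qed

lemma sign_square: "\<theta> \<in> B \<rightarrow>\<^sub>E {-1, 1} \<Longrightarrow> K \<in> B \<Longrightarrow> \<theta> K * \<theta> K = (1::real)"
  by (auto simp: PiE_iff)

lemma sum_signs_pair_product:
  assumes "K \<in> B" "L \<in> B" "K \<noteq> L"
  shows "(\<Sum>\<theta>\<in>B \<rightarrow>\<^sub>E {-1, 1}. \<theta> K * \<theta> L * c) = (0::real)"
  by (rule sum_signs_eq_0_if_flip_odd[OF assms(1)]) (use assms in auto)

lemma sum_signs_two_pair_product:
  fixes B :: "'i set" and c :: real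
  assumes u: "fst u \<in> B" "snd u \<in> B" "fst u \<noteq> snd u"
    and v: "fst v \<in> B" "snd v \<in> B" "fst v \<noteq> snd v"
  shows "(\<Sum>\<theta>\<in>B \<rightarrow>\<^sub>E {-1, 1}. \<theta> (fst u) * \<theta> (snd u) * (\<theta> (fst v) * \<theta> (snd v)) * c)
     = (if v = u \<or> v = prod.swap u then real (card (B \<rightarrow>\<^sub>E ({-1, 1} :: real set))) * c else 0)"
proof (cases "v = u \<or> v = prod.swap u")
  case True
  have "\<theta> (fst u) * \<theta> (snd u) * (\<theta> (fst v) * \<theta> (snd v)) = (1::real)" if "\<theta> \<in> B \<rightarrow>\<^sub>E {-1, 1}" for \<theta>
    using True sign_square[OF that u(1)] sign_square[OF that u(2)] by (auto simp: mult_ac)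
  then show ?thesis
    using True by simp
next
  case False
  \<comment> \<open>Some index occurs exactly once among the four, so flipping its sign makes the summand odd.\<close>
  then obtain K where "K \<in> B" and odd: "(K = fst u \<or> K = snd u) \<noteq> (K = fst v \<or> K = snd v)"
    using u v by (cases u, cases v) auto
  have "(\<Sum>\<theta>\<in>B \<rightarrow>\<^sub>E {-1, 1}. \<theta> (fst u) * \<theta> (snd u) * (\<theta> (fst v) * \<theta> (snd v)) * c) = 0"
    by (rule sum_signs_eq_0_if_flip_odd[OF \<open>K \<in> B\<close>]) (use u v odd in auto)
  then show ?thesis
    using False by simp
qed

lemma sum_signs_off_diagonal_chaos:
  fixes B :: "'i set" and a :: "'i \<Rightarrow> 'i \<Rightarrow> real"
  assumes fin: "finite B"
  defines "P \<equiv> {(K, L). K \<in> B \<and> L \<in> B \<and> K \<noteq> L}"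
  defines "Y \<equiv> \<lambda>\<theta>. \<Sum>u\<in>P. \<theta> (fst u) * \<theta> (snd u) * a (fst u) (snd u)"
  shows "(\<Sum>\<theta>\<in>B \<rightarrow>\<^sub>E {-1, 1}. Y \<theta>) = 0"
    and "(\<Sum>\<theta>\<in>B \<rightarrow>\<^sub>E {-1, 1}. (Y \<theta>)\<^sup>2)
           \<le> real (card (B \<rightarrow>\<^sub>E ({-1, 1} :: real set))) * (2 * (\<Sum>K\<in>B. \<Sum>L\<in>B. (a K L)\<^sup>2))"
proof -
  have finP: "finite P"
    by (rule finite_subset[of _ "B \<times> B"]) (use fin in \<open>auto simp: P_def\<close>)
  have P: "fst u \<in> B" "snd u \<in> B" "fst u \<noteq> snd u" "prod.swap u \<in> P" if "u \<in> P" for u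
    using that by (auto simp: P_def)
  show "(\<Sum>\<theta>\<in>B \<rightarrow>\<^sub>E {-1, 1}. Y \<theta>) = 0"
  proof -
    have "(\<Sum>\<theta>\<in>B \<rightarrow>\<^sub>E {-1, 1}. Y \<theta>)
        = (\<Sum>u\<in>P. \<Sum>\<theta>\<in>B \<rightarrow>\<^sub>E {-1, 1}. \<theta> (fst u) * \<theta> (snd u) * a (fst u) (snd u))"
      unfolding Y_def by (rule sum.swap)
    also have "\<dots> = 0"
      using P by (intro sum.neutral ballI sum_signs_pair_product) auto
    finally show ?thesis .
  qed
  define c where "c = real (card (B \<rightarrow>\<^sub>E ({-1, 1} :: real set)))"
  define au where "au u = a (fst u) (snd u)" for u
  have swap: "(\<Sum>u\<in>P. (au (prod.swap u))\<^sup>2) = (\<Sum>u\<in>P. (au u)\<^sup>2)"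
    by (rule sum.reindex_bij_witness[where i = prod.swap and j = prod.swap]) (auto simp: P_def)
  have cross: "(\<Sum>u\<in>P. au u * au (prod.swap u)) \<le> (\<Sum>u\<in>P. (au u)\<^sup>2)"
  proof -
    have "(\<Sum>u\<in>P. au u * au (prod.swap u)) \<le> (\<Sum>u\<in>P. ((au u)\<^sup>2 + (au (prod.swap u))\<^sup>2) / 2)"
      using sum_squares_bound[of "au _" "au (prod.swap _)"] by (intro sum_mono) (simp add: field_simps)
    also have "\<dots> = (\<Sum>u\<in>P. (au u)\<^sup>2)"
      using swap by (simp add: sum.distrib sum_divide_distrib[symmetric])
    finally show ?thesis .
  qed
  have "(\<Sum>\<theta>\<in>B \<rightarrow>\<^sub>E {-1, 1}. (Y \<theta>)\<^sup>2) = (\<Sum>u\<in>P. \<Sum>v\<in>P. \<Sum>\<theta>\<in>B \<rightarrow>\<^sub>E {-1, 1}.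
        \<theta> (fst u) * \<theta> (snd u) * (\<theta> (fst v) * \<theta> (snd v)) * (au u * au v))"
    unfolding Y_def power2_eq_square sum_product au_def
    by (subst sum.swap, subst sum.swap) (simp add: mult_ac)
  also have "\<dots> = (\<Sum>u\<in>P. \<Sum>v\<in>P. if v \<in> {u, prod.swap u} then c * (au u * au v) else 0)"
    unfolding c_def using P by (intro sum.cong refl) (simp add: sum_signs_two_pair_product)
  also have "\<dots> = (\<Sum>u\<in>P. c * (au u * au u) + c * (au u * au (prod.swap u)))"
  proof (rule sum.cong[OF refl])
    fix u assume u: "u \<in> P"
    have "prod.swap u \<noteq> u"
      using P(3)[OF u] by (metis fst_swap snd_swap)
    then show "(\<Sum>v\<in>P. if v \<in> {u, prod.swap u} then c * (au u * au v) else 0)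
        = c * (au u * au u) + c * (au u * au (prod.swap u))"
      using u P(4)[OF u] by (simp only: sum.inter_restrict[OF finP, symmetric]) (simp add: insert_absorb Int_absorb1)
  qed
  also have "\<dots> = c * ((\<Sum>u\<in>P. (au u)\<^sup>2) + (\<Sum>u\<in>P. au u * au (prod.swap u)))"
    by (simp add: sum.distrib distrib_left sum_distrib_left power2_eq_square)
  also have "\<dots> \<le> c * (2 * (\<Sum>u\<in>P. (au u)\<^sup>2))"
    using cross by (intro mult_left_mono) (auto simp: c_def)
  also have "(\<Sum>u\<in>P. (au u)\<^sup>2) \<le> (\<Sum>u\<in>B \<times> B. (au u)\<^sup>2)"
    using fin by (intro sum_mono2) (auto simp: P_def)
  also have "\<dots> = (\<Sum>K\<in>B. \<Sum>L\<in>B. (a K L)\<^sup>2)"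
    by (simp add: sum.cartesian_product au_def case_prod_beta)
  finally show "(\<Sum>\<theta>\<in>B \<rightarrow>\<^sub>E {-1, 1}. (Y \<theta>)\<^sup>2) \<le> c * (2 * (\<Sum>K\<in>B. \<Sum>L\<in>B. (a K L)\<^sup>2))"
    by (simp add: c_def mult_left_mono)
qed

lemma quadratic_form_minus_diagonal:
  fixes a :: "'i \<Rightarrow> 'i \<Rightarrow> real"
  assumes fin: "finite B" and \<theta>: "\<theta> \<in> B \<rightarrow>\<^sub>E {-1, 1}"
  shows "(\<Sum>K\<in>B. \<Sum>L\<in>B. \<theta> K * \<theta> L * a K L) - (\<Sum>K\<in>B. a K K)
       = (\<Sum>u\<in>{(K, L). K \<in> B \<and> L \<in> B \<and> K \<noteq> L}. \<theta> (fst u) * \<theta> (snd u) * a (fst u) (snd u))"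
proof -
  have "(\<Sum>K\<in>B. \<Sum>L\<in>B. \<theta> K * \<theta> L * a K L) = (\<Sum>K\<in>B. a K K + (\<Sum>L\<in>B - {K}. \<theta> K * \<theta> L * a K L))"
    using fin sign_square[OF \<theta>] by (intro sum.cong refl) (simp add: sum.remove)
  also have "\<dots> = (\<Sum>K\<in>B. a K K) + (\<Sum>(K, L)\<in>Sigma B (\<lambda>K. B - {K}). \<theta> K * \<theta> L * a K L)"
    using fin by (simp add: sum.distrib sum.Sigma)
  also have "Sigma B (\<lambda>K. B - {K}) = {(K, L). K \<in> B \<and> L \<in> B \<and> K \<noteq> L}"
    by auto
  finally show ?thesis
    by (simp add: case_prod_beta)
qed

lemma sign_avg_cong: "(\<And>\<theta>. \<theta> \<in> B \<rightarrow>\<^sub>E {-1, 1} \<Longrightarrow> Z \<theta> = Z' \<theta>) \<Longrightarrow> sign_avg B Z = sign_avg B Z'"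
  unfolding sign_avg_def by (simp cong: sum.cong)

lemma sign_avg_var_quadratic_form:
  fixes a :: "nat \<times> nat \<Rightarrow> nat \<times> nat \<Rightarrow> real"
  assumes fin: "finite B"
  defines "Q \<equiv> \<lambda>\<theta>. (\<Sum>K\<in>B. \<Sum>L\<in>B. \<theta> K * \<theta> L * a K L) - (\<Sum>K\<in>B. a K K)"
  shows "sign_avg B Q = 0" and "sign_var B Q \<le> 2 * (\<Sum>K\<in>B. \<Sum>L\<in>B. (a K L)\<^sup>2)"
proof -
  define Y where "Y \<theta> = (\<Sum>u\<in>{(K, L). K \<in> B \<and> L \<in> B \<and> K \<noteq> L}. \<theta> (fst u) * \<theta> (snd u) * a (fst u) (snd u))"
    for \<theta> :: "nat \<times> nat \<Rightarrow> real"
  note chaos = sum_signs_off_diagonal_chaos[OF fin, of a, folded Y_def]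
  have QY: "Q \<theta> = Y \<theta>" if "\<theta> \<in> B \<rightarrow>\<^sub>E {-1, 1}" for \<theta>
    unfolding Q_def Y_def using quadratic_form_minus_diagonal[OF fin that] .
  have card: "real (card (B \<rightarrow>\<^sub>E ({-1, 1} :: real set))) > 0"
    using fin by (simp add: card_PiE)
  have "sign_avg B Q = sign_avg B Y"
    using QY by (rule sign_avg_cong)
  then show avg: "sign_avg B Q = 0"
    using chaos(1) by (simp add: sign_avg_def)
  have "sign_var B Q = sign_avg B (\<lambda>\<theta>. (Y \<theta>)\<^sup>2)"
    unfolding sign_var_def avg using QY by (intro sign_avg_cong) simp
  also have "\<dots> \<le> 2 * (\<Sum>K\<in>B. \<Sum>L\<in>B. (a K L)\<^sup>2)"
    using chaos(2) card by (simp add: sign_avg_def divide_le_eq mult.commute)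
  finally show "sign_var B Q \<le> 2 * (\<Sum>K\<in>B. \<Sum>L\<in>B. (a K L)\<^sup>2)" .
qed

lemma double_sum_square_le:
  fixes a :: "'i \<Rightarrow> 'i \<Rightarrow> real"
  assumes m: "m \<ge> 0" "\<And>K L. K \<in> B \<Longrightarrow> L \<in> B \<Longrightarrow> \<bar>a K L\<bar> \<le> m"
    and R: "\<And>K. K \<in> B \<Longrightarrow> (\<Sum>L\<in>B. \<bar>a K L\<bar>) \<le> R"
  shows "(\<Sum>K\<in>B. \<Sum>L\<in>B. (a K L)\<^sup>2) \<le> real (card B) * m * R"
proof -
  have "(\<Sum>L\<in>B. (a K L)\<^sup>2) \<le> m * R" if K: "K \<in> B" for K
  proof -
    have "(\<Sum>L\<in>B. (a K L)\<^sup>2) \<le> (\<Sum>L\<in>B. m * \<bar>a K L\<bar>)"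
    proof (rule sum_mono)
      fix L assume "L \<in> B"
      then have "\<bar>a K L\<bar> * \<bar>a K L\<bar> \<le> m * \<bar>a K L\<bar>"
        using m(2)[OF K] by (intro mult_right_mono) auto
      then show "(a K L)\<^sup>2 \<le> m * \<bar>a K L\<bar>"
        by (simp add: power2_eq_square)
    qed
    also have "\<dots> \<le> m * R"
      using R[OF K] m(1) by (simp add: sum_distrib_left[symmetric] mult_left_mono)
    finally show ?thesis .
  qed
  then have "(\<Sum>K\<in>B. \<Sum>L\<in>B. (a K L)\<^sup>2) \<le> (\<Sum>K\<in>B. m * R)"
    by (rule sum_mono)
  then show ?thesis
    by simp
qed

section \<open>Lp norms and bounded operators\<close>

lemma integral_comp_eq_if_distr_eq:
  fixes F :: "'b \<Rightarrow> real"
  assumes f: "f \<in> measurable M N" and g: "g \<in> measurable M N"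
    and distr: "distr M N f = distr M N g" and F: "F \<in> borel_measurable N"
  shows "integrable M (\<lambda>x. F (f x)) \<longleftrightarrow> integrable M (\<lambda>x. F (g x))"
    and "(\<integral>x. F (f x) \<partial>M) = (\<integral>x. F (g x) \<partial>M)"
  using integrable_distr_eq[OF f F] integrable_distr_eq[OF g F]
    integral_distr[OF f F] integral_distr[OF g F] distr
  by simp_all

lemma Lp_norm_nonneg: "Lp_norm p f \<ge> 0"
  unfolding Lp_norm_def by simp

lemma Lp_norm_zero: "p > 0 \<Longrightarrow> Lp_norm p (\<lambda>x. 0) = 0"
  unfolding Lp_norm_def by simp

lemma Lp_norm_scale:
  assumes "p > 0"
  shows "Lp_norm p (\<lambda>x. t * f x) = \<bar>t\<bar> * Lp_norm p f"
proof -
  have "(\<integral>x. \<bar>f x\<bar> powr p \<partial>lmeas) \<ge> 0"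
    by (rule integral_nonneg_AE) auto
  then show ?thesis
    unfolding Lp_norm_def using assms by (simp add: abs_mult powr_mult powr_powr)
qed

lemma bounded_linear_on_lincomb:
  "bounded_linear_on p X T \<Longrightarrow> f \<in> X \<Longrightarrow> g \<in> X \<Longrightarrow> T (\<lambda>x. a * f x + b * g x) = (\<lambda>x. a * T f x + b * T g x)"
  unfolding bounded_linear_on_def by blast

lemma bounded_linear_on_scale:
  assumes "bounded_linear_on p X T" "f \<in> X"
  shows "T (\<lambda>x. t * f x) = (\<lambda>x. t * T f x)"
  using bounded_linear_on_lincomb[OF assms assms(2), of t 0] by simp

lemma Lp_norm_le_op_norm_of_le_1:
  assumes T: "bounded_linear_on p X T" and f: "f \<in> X" "Lp_norm p f \<le> 1"
  shows "Lp_norm p (T f) \<le> op_norm p X T"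
  unfolding op_norm_def
proof (rule cSup_upper)
  obtain C0 where C0: "\<forall>f\<in>X. Lp_norm p (T f) \<le> C0 * Lp_norm p f"
    using T unfolding bounded_linear_on_def by blast
  have "Lp_norm p (T g) \<le> max C0 0" if "g \<in> X" "Lp_norm p g \<le> 1" for g
  proof -
    have "Lp_norm p (T g) \<le> max C0 0 * Lp_norm p g"
      using C0 that(1) Lp_norm_nonneg[of p g] by (meson max.cobounded1 mult_right_mono order_trans)
    also have "\<dots> \<le> max C0 0"
      using that(2) by (simp add: mult_left_le)
    finally show ?thesis .
  qed
  then show "bdd_above {Lp_norm p (T f) | f. f \<in> X \<and> Lp_norm p f \<le> 1}"
    by (intro bdd_aboveI[where M = "max C0 0"]) blast
qed (use f in auto)

lemma op_norm_nonneg: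
  assumes "p > 0" "bounded_linear_on p X T" "(\<lambda>x. 0) \<in> X"
  shows "op_norm p X T \<ge> 0"
  using Lp_norm_le_op_norm_of_le_1[OF assms(2,3)] bounded_linear_on_scale[OF assms(2,3), of 0]
  by (simp add: Lp_norm_zero[OF assms(1)])

lemma Lp_norm_le_op_norm:
  assumes p: "p > 0" and T: "bounded_linear_on p X T"
    and f: "f \<in> X" and scale: "\<And>t. (\<lambda>x. t * f x) \<in> X"
  shows "Lp_norm p (T f) \<le> op_norm p X T * Lp_norm p f"
proof (cases "Lp_norm p f = 0")
  case True
  obtain C0 where "\<forall>f\<in>X. Lp_norm p (T f) \<le> C0 * Lp_norm p f"
    using T unfolding bounded_linear_on_def by blast
  then have "Lp_norm p (T f) \<le> 0"
    using True f by auto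
  then show ?thesis
    using True by simp
next
  case False
  define n where "n = Lp_norm p f"
  have n: "n > 0"
    using False Lp_norm_nonneg[of p f] by (simp add: n_def)
  have "T (\<lambda>x. (1 / n) * f x) = (\<lambda>x. (1 / n) * T f x)"
    by (rule bounded_linear_on_scale[OF T f])
  moreover have "Lp_norm p (T (\<lambda>x. (1 / n) * f x)) \<le> op_norm p X T"
    using Lp_norm_scale[OF p, of "1 / n" f] n by (intro Lp_norm_le_op_norm_of_le_1[OF T scale]) (simp add: n_def)
  ultimately have "(1 / n) * Lp_norm p (T f) \<le> op_norm p X T"
    using Lp_norm_scale[OF p, of "1 / n" "T f"] n by simp
  then show ?thesis
    using n by (simp add: n_def field_simps)
qed

lemma inverse_two_pow_powr: "(1 / 2 ^ n) powr r = 2 powr (- real n * r)"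
proof -
  have "1 / 2 ^ n = 2 powr (- real n)"
    by (simp add: powr_minus_divide powr_realpow)
  then show ?thesis
    by (simp add: powr_powr)
qed

lemma Rp0_if_in_span: "p > 0 \<Longrightarrow> in_Lp p f \<Longrightarrow> f \<in> lin_span_hh hh \<Longrightarrow> f \<in> Rp0 p hh"
  unfolding Rp0_def by (auto intro!: bexI[of _ f] simp: Lp_norm_zero)

section \<open>Copies of the level-N Haar functions in block M\<close>

locale haar_block =
  fixes p :: real and hh :: "nat \<Rightarrow> nat \<times> nat \<Rightarrow> real \<Rightarrow> real"
    and T :: "(real \<Rightarrow> real) \<Rightarrow> (real \<Rightarrow> real)"
    and M N :: nat and B :: "(nat \<times> nat) set"
  assumes p: "1 < p"
    and hh: "haar_copies hh"
    and T: "bounded_linear_on p (Rp0 p hh) T"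
    and NM: "N < M"
    and B: "B \<subseteq> dyadic_level N"
begin

abbreviation "q \<equiv> p / (p - 1)"
abbreviation "DM \<equiv> dyadic_upto (M - 1)"
abbreviation "X \<equiv> Rp0 p hh"
abbreviation "C \<equiv> op_norm p X T"

definition hh_sum :: "(nat \<times> nat) set \<Rightarrow> (nat \<times> nat \<Rightarrow> real) \<Rightarrow> real \<Rightarrow> real" where
  "hh_sum S c = (\<lambda>x. \<Sum>K\<in>S. c K * hh M K x)"

lemma conjugate_exponents: "q > 1" "1 / p + 1 / q = 1"
  using p by (auto simp: field_simps)

lemma dyadic_level_N_subset: "dyadic_level N \<subseteq> DM"
  using NM by (auto simp: dyadic_upto_def intro!: bexI[of _ N])

lemma B_subset: "B \<subseteq> DM"
  using B dyadic_level_N_subset by blast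

lemma finite_B: "finite B"
  using B finite_dyadic_level by (rule finite_subset)

lemma measurable_hh: "K \<in> DM \<Longrightarrow> hh M K \<in> borel_measurable lmeas"
  using hh NM unfolding haar_copies_def by auto

lemma hh_sum_haar_transfer:
  fixes \<Phi> :: "real \<Rightarrow> real"
  assumes S: "S \<subseteq> DM" and \<Phi>: "\<Phi> \<in> borel_measurable borel"
  shows "integrable lmeas (\<lambda>x. \<Phi> (hh_sum S c x)) \<longleftrightarrow> integrable lmeas (\<lambda>x. \<Phi> (\<Sum>K\<in>S. c K * haar K x))"
    and "(\<integral>x. \<Phi> (hh_sum S c x) \<partial>lmeas) = (\<integral>x. \<Phi> (\<Sum>K\<in>S. c K * haar K x) \<partial>lmeas)"
proof -
  define F where "F v = \<Phi> (\<Sum>K\<in>S. c K * v K)" for v :: "nat \<times> nat \<Rightarrow> real"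
  have [measurable]: "K \<in> DM \<Longrightarrow> (\<lambda>v. v K) \<in> borel_measurable (PiM DM (\<lambda>_. borel))" for K
    by measurable
  have Fm: "F \<in> borel_measurable (PiM DM (\<lambda>_. borel))"
    unfolding F_def using S \<Phi> by (intro measurable_compose[OF _ \<Phi>] borel_measurable_sum) auto
  have hhm: "(\<lambda>x. \<lambda>I\<in>DM. hh M I x) \<in> measurable lmeas (PiM DM (\<lambda>_. borel))"
    by (rule measurable_restrict) (rule measurable_hh)
  have haarm: "(\<lambda>x. \<lambda>I\<in>DM. haar I x) \<in> measurable lmeas (PiM DM (\<lambda>_. borel))"
    by (intro measurable_restrict borel_measurable_lmeas borel_measurable_haar)
  have distr: "distr lmeas (PiM DM (\<lambda>_. borel)) (\<lambda>x. \<lambda>I\<in>DM. hh M I x)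
             = distr lmeas (PiM DM (\<lambda>_. borel)) (\<lambda>x. \<lambda>I\<in>DM. haar I x)"
    using hh NM unfolding haar_copies_def by auto
  have "F (\<lambda>I\<in>DM. hh M I x) = \<Phi> (hh_sum S c x)" "F (\<lambda>I\<in>DM. haar I x) = \<Phi> (\<Sum>K\<in>S. c K * haar K x)" for x
    unfolding F_def hh_sum_def using S by (auto intro!: arg_cong[where f = \<Phi>] sum.cong)
  with integral_comp_eq_if_distr_eq[OF hhm haarm distr Fm]
  show "integrable lmeas (\<lambda>x. \<Phi> (hh_sum S c x)) \<longleftrightarrow> integrable lmeas (\<lambda>x. \<Phi> (\<Sum>K\<in>S. c K * haar K x))"
    and "(\<integral>x. \<Phi> (hh_sum S c x) \<partial>lmeas) = (\<integral>x. \<Phi> (\<Sum>K\<in>S. c K * haar K x) \<partial>lmeas)"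
    by simp_all
qed

lemma in_Lp_hh_sum:
  assumes "finite S" "S \<subseteq> DM"
  shows "in_Lp p (hh_sum S c)"
  unfolding in_Lp_def
proof
  show "hh_sum S c \<in> borel_measurable lmeas"
    unfolding hh_sum_def using assms(2) measurable_hh by (intro borel_measurable_sum) auto
  interpret finite_measure lmeas
    by (rule finite_measure_lmeas)
  have "integrable lmeas (\<lambda>x. \<bar>\<Sum>K\<in>S. c K * haar K x\<bar> powr p)"
  proof (rule integrable_const_bound[where B = "(\<Sum>K\<in>S. \<bar>c K\<bar>) powr p"])
    show "AE x in lmeas. norm (\<bar>\<Sum>K\<in>S. c K * haar K x\<bar> powr p) \<le> (\<Sum>K\<in>S. \<bar>c K\<bar>) powr p"
      using p by (intro AE_I2) (simp add: powr_mono2 abs_sum_haar_le)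
  qed (intro borel_measurable_lmeas, measurable)
  then show "integrable lmeas (\<lambda>x. \<bar>hh_sum S c x\<bar> powr p)"
    using hh_sum_haar_transfer(1)[OF assms(2), of "\<lambda>y. \<bar>y\<bar> powr p"] by simp
qed

lemma hh_sum_in_span:
  assumes "finite S" "S \<subseteq> DM"
  shows "hh_sum S c \<in> lin_span_hh hh"
proof -
  have "(\<lambda>K. (M, K)) ` S \<subseteq> D_omega"
    using assms(2) NM by (auto simp: D_omega_def)
  moreover have "hh_sum S c = (\<lambda>x. \<Sum>j\<in>(\<lambda>K. (M, K)) ` S. c (snd j) * hh (fst j) (snd j) x)"
    unfolding hh_sum_def by (simp add: sum.reindex inj_on_def)
  ultimately show ?thesis
    unfolding lin_span_hh_def using assms(1)
    by (intro CollectI exI[of _ "(\<lambda>K. (M, K)) ` S"] exI[of _ "\<lambda>j. c (snd j)"]) simp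
qed

lemma hh_sum_in_X: "finite S \<Longrightarrow> S \<subseteq> DM \<Longrightarrow> hh_sum S c \<in> X"
  using p by (intro Rp0_if_in_span in_Lp_hh_sum hh_sum_in_span) auto

lemma T_hh_sum:
  assumes "finite S" "S \<subseteq> DM"
  shows "T (hh_sum S c) = (\<lambda>x. \<Sum>K\<in>S. c K * T (hh M K) x)"
  using assms
proof (induction S rule: finite_induct)
  case empty
  then show ?case
    using bounded_linear_on_scale[OF T hh_sum_in_X[of "{}"], of 0] by (simp add: hh_sum_def)
next
  case (insert K S)
  have "hh_sum (insert K S) c = (\<lambda>x. c K * hh_sum {K} (\<lambda>_. 1) x + 1 * hh_sum S c x)"
    using insert by (simp add: hh_sum_def)
  moreover have "hh_sum {K} (\<lambda>_. 1) \<in> X"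
    using insert.prems by (intro hh_sum_in_X) auto
  moreover have "hh_sum S c \<in> X"
    using insert by (intro hh_sum_in_X) auto
  ultimately have "T (hh_sum (insert K S) c) = (\<lambda>x. c K * T (hh M K) x + T (hh_sum S c) x)"
    using bounded_linear_on_lincomb[OF T, of "hh_sum {K} (\<lambda>_. 1)" "hh_sum S c" "c K" 1]
    by (simp add: hh_sum_def)
  then show ?case
    using insert by simp
qed

lemma Lp_norm_T_hh_sum_le:
  assumes "finite S" "S \<subseteq> DM"
  shows "Lp_norm p (T (hh_sum S c)) \<le> C * Lp_norm p (hh_sum S c)"
proof (rule Lp_norm_le_op_norm[OF _ T hh_sum_in_X[OF assms]])
  show "(\<lambda>x. t * hh_sum S c x) \<in> X" for t
    using hh_sum_in_X[OF assms, of "\<lambda>K. t * c K"] by (simp add: hh_sum_def sum_distrib_left mult.assoc)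
qed (use p in simp)

lemma integral_abs_hh_sum_signs_powr:
  assumes S: "S \<subseteq> dyadic_level N" and \<epsilon>: "\<And>K. K \<in> S \<Longrightarrow> \<bar>\<epsilon> K\<bar> = 1" and r: "r > 0"
  shows "integrable lmeas (\<lambda>x. \<bar>hh_sum S \<epsilon> x\<bar> powr r)"
    and "(\<integral>x. \<bar>hh_sum S \<epsilon> x\<bar> powr r \<partial>lmeas) = real (card S) / 2 ^ N"
proof -
  have SD: "S \<subseteq> DM"
    using S dyadic_level_N_subset by blast
  have "(\<Union>K\<in>S. dyint K) \<subseteq> {0..1}"
    using S dyint_level_subset_unit by blast
  then have "integrable lmeas (indicator (\<Union>K\<in>S. dyint K) :: real \<Rightarrow> real)"
    and "integral\<^sup>L lmeas (indicator (\<Union>K\<in>S. dyint K)) = real (card S) / 2 ^ N"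
    using lmeas_indicator[of "\<Union>K\<in>S. dyint K"] measure_UN_dyint[OF S]
      finite_subset[OF S finite_dyadic_level] by auto
  then show "integrable lmeas (\<lambda>x. \<bar>hh_sum S \<epsilon> x\<bar> powr r)"
    and "(\<integral>x. \<bar>hh_sum S \<epsilon> x\<bar> powr r \<partial>lmeas) = real (card S) / 2 ^ N"
    using hh_sum_haar_transfer[OF SD, of "\<lambda>y. \<bar>y\<bar> powr r"]
    by (simp_all add: abs_sum_signed_haar_powr[OF S \<epsilon> r] del: UN_simps)
qed

lemma Lp_norm_hh_sum_signs:
  assumes "S \<subseteq> dyadic_level N" "\<And>K. K \<in> S \<Longrightarrow> \<bar>\<epsilon> K\<bar> = 1"
  shows "Lp_norm p (hh_sum S \<epsilon>) = (real (card S) / 2 ^ N) powr (1 / p)"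
  unfolding Lp_norm_def using integral_abs_hh_sum_signs_powr(2)[OF assms, where r = p] p by simp

lemma hh_eq_hh_sum: "hh M K = hh_sum {K} (\<lambda>_. 1)"
  by (simp add: hh_sum_def)

lemma pairing_hh_T_bound:
  assumes K: "K \<in> dyadic_level N" and g: "g \<in> X"
  shows "integrable lmeas (\<lambda>x. hh M K x * T g x)"
    and "\<bar>pairing (hh M K) (T g)\<bar> \<le> 2 powr (- real N / q) * Lp_norm p (T g)"
proof -
  have "{K} \<subseteq> dyadic_level N"
    using K by simp
  moreover have "q > 0"
    using conjugate_exponents(1) by simp
  ultimately have hh_q: "integrable lmeas (\<lambda>x. \<bar>hh M K x\<bar> powr q)"
      "(\<integral>x. \<bar>hh M K x\<bar> powr q \<partial>lmeas) = 1 / 2 ^ N"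
    using integral_abs_hh_sum_signs_powr[of "{K}" "\<lambda>_. 1" q] by (simp_all add: hh_eq_hh_sum)
  have Tg: "in_Lp p (T g)"
    using T g unfolding bounded_linear_on_def Rp0_def by blast
  have hhm: "hh M K \<in> borel_measurable lmeas"
    using K dyadic_level_N_subset by (intro measurable_hh) auto
  note Holder = Holder_inequality[OF conjugate_exponents(1) p _ hhm, where g = "T g"]
  show "integrable lmeas (\<lambda>x. hh M K x * T g x)"
    using Holder(1) Tg hh_q conjugate_exponents by (simp add: in_Lp_def add.commute)
  have "\<bar>pairing (hh M K) (T g)\<bar> \<le> (1 / 2 ^ N) powr (1 / q) * Lp_norm p (T g)"
    using Holder(2) Tg hh_q conjugate_exponents
    by (simp add: in_Lp_def add.commute pairing_def Lp_norm_def)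
  then show "\<bar>pairing (hh M K) (T g)\<bar> \<le> 2 powr (- real N / q) * Lp_norm p (T g)"
    by (simp add: inverse_two_pow_powr)
qed

definition hh_entry :: "nat \<times> nat \<Rightarrow> nat \<times> nat \<Rightarrow> real" where
  "hh_entry K L = pairing (hh M K) (T (hh M L))"

lemma pairing_hh_T_hh_sum:
  assumes K: "K \<in> B"
  shows "pairing (hh M K) (T (hh_sum B c)) = (\<Sum>L\<in>B. c L * hh_entry K L)"
proof -
  have int: "integrable lmeas (\<lambda>x. hh M K x * T (hh M L) x)" if "L \<in> B" for L
    using K B that B_subset finite_B
    by (intro pairing_hh_T_bound(1)) (auto simp: hh_eq_hh_sum intro!: hh_sum_in_X)
  have "pairing (hh M K) (T (hh_sum B c)) = (\<integral>x. (\<Sum>L\<in>B. c L * (hh M K x * T (hh M L) x)) \<partial>lmeas)"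
    unfolding pairing_def T_hh_sum[OF finite_B B_subset] by (simp add: sum_distrib_left mult_ac)
  also have "\<dots> = (\<Sum>L\<in>B. c L * hh_entry K L)"
    using int by (simp add: hh_entry_def pairing_def)
  finally show ?thesis .
qed

lemma pairing_hh_sum_T_hh_sum:
  "pairing (hh_sum B c) (T (hh_sum B c)) = (\<Sum>K\<in>B. \<Sum>L\<in>B. c K * c L * hh_entry K L)"
proof -
  have int: "integrable lmeas (\<lambda>x. hh M K x * T (hh_sum B c) x)" if "K \<in> B" for K
    using B that by (intro pairing_hh_T_bound(1) hh_sum_in_X[OF finite_B B_subset]) auto
  have "pairing (hh_sum B c) (T (hh_sum B c)) = (\<integral>x. (\<Sum>K\<in>B. c K * (hh M K x * T (hh_sum B c) x)) \<partial>lmeas)"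
    unfolding pairing_def hh_sum_def[of B c] by (simp add: sum_distrib_right mult_ac)
  also have "\<dots> = (\<Sum>K\<in>B. c K * pairing (hh M K) (T (hh_sum B c)))"
    using int by (simp add: pairing_def)
  also have "\<dots> = (\<Sum>K\<in>B. \<Sum>L\<in>B. c K * c L * hh_entry K L)"
    by (simp add: pairing_hh_T_hh_sum sum_distrib_left mult_ac)
  finally show ?thesis .
qed

lemma abs_hh_entry_le:
  assumes K: "K \<in> B" and L: "L \<in> B"
  shows "\<bar>hh_entry K L\<bar> \<le> C / 2 ^ N"
proof -
  have L': "{L} \<subseteq> dyadic_level N" "finite {L}" "{L} \<subseteq> DM"
    using L B dyadic_level_N_subset by auto
  have "\<bar>hh_entry K L\<bar> \<le> 2 powr (- real N / q) * Lp_norm p (T (hh M L))"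
    unfolding hh_entry_def hh_eq_hh_sum[of L] using K B L'
    by (intro pairing_hh_T_bound(2) hh_sum_in_X) auto
  also have "\<dots> \<le> 2 powr (- real N / q) * (C * (1 / 2 ^ N) powr (1 / p))"
    using Lp_norm_T_hh_sum_le[OF L'(2,3), of "\<lambda>_. 1"] Lp_norm_hh_sum_signs[OF L'(1), of "\<lambda>_. 1"]
    by (intro mult_left_mono) (simp_all add: hh_eq_hh_sum)
  also have "\<dots> = C * 2 powr (- real N * (1 / p + 1 / q))"
    by (simp add: inverse_two_pow_powr powr_add[symmetric] algebra_simps)
  also have "\<dots> = C / 2 ^ N"
    unfolding conjugate_exponents(2) using inverse_two_pow_powr[of N 1] by (simp add: divide_inverse)
  finally show ?thesis .
qed

lemma row_sum_abs_hh_entry_le: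
  assumes K: "K \<in> B"
  shows "(\<Sum>L\<in>B. \<bar>hh_entry K L\<bar>) \<le> 2 powr (- real N / q) * (C * (real (card B) / 2 ^ N) powr (1 / p))"
proof -
  \<comment> \<open>With \<epsilon> the signs of row K, the row sum becomes a pairing with T of a \<plusminus>1 combination.\<close>
  define \<epsilon> where "\<epsilon> L = (if hh_entry K L \<ge> 0 then 1 else - 1 :: real)" for L
  have KN: "K \<in> dyadic_level N"
    using K B by blast
  have "(\<Sum>L\<in>B. \<bar>hh_entry K L\<bar>) = pairing (hh M K) (T (hh_sum B \<epsilon>))"
    unfolding pairing_hh_T_hh_sum[OF K] \<epsilon>_def by (intro sum.cong refl) simp
  also have "\<dots> \<le> 2 powr (- real N / q) * Lp_norm p (T (hh_sum B \<epsilon>))"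
    by (rule abs_le_D1[OF pairing_hh_T_bound(2)[OF KN hh_sum_in_X[OF finite_B B_subset]]])
  also have "\<dots> \<le> 2 powr (- real N / q) * (C * Lp_norm p (hh_sum B \<epsilon>))"
    by (intro mult_left_mono Lp_norm_T_hh_sum_le[OF finite_B B_subset]) simp
  also have "Lp_norm p (hh_sum B \<epsilon>) = (real (card B) / 2 ^ N) powr (1 / p)"
    by (rule Lp_norm_hh_sum_signs[OF B]) (simp add: \<epsilon>_def)
  finally show ?thesis .
qed

lemma sum_hh_entry_squares_le:
  "(\<Sum>K\<in>B. \<Sum>L\<in>B. (hh_entry K L)\<^sup>2)
     \<le> C\<^sup>2 * (real (card B) / 2 ^ N) powr (1 / p + 1) * 2 powr (- real N / q)"
proof -
  have "C \<ge> 0"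
    using p T hh_sum_in_X[of "{}"] by (intro op_norm_nonneg) (auto simp: hh_sum_def)
  then have "(\<Sum>K\<in>B. \<Sum>L\<in>B. (hh_entry K L)\<^sup>2)
      \<le> real (card B) * (C / 2 ^ N) * (2 powr (- real N / q) * (C * (real (card B) / 2 ^ N) powr (1 / p)))"
    by (intro double_sum_square_le abs_hh_entry_le row_sum_abs_hh_entry_le) auto
  also have "\<dots> = C\<^sup>2 * (real (card B) / 2 ^ N) powr (1 / p + 1) * 2 powr (- real N / q)"
    by (simp add: powr_add power2_eq_square)
  finally show ?thesis .
qed

end

theorem mainTheorem7:
  fixes p :: real and hh :: "nat \<Rightarrow> nat \<times> nat \<Rightarrow> real \<Rightarrow> real"
    and T :: "(real \<Rightarrow> real) \<Rightarrow> (real \<Rightarrow> real)"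
    and M N :: nat and B :: "(nat \<times> nat) set"
  assumes "1 < p"
    and "haar_copies hh"
    and "bounded_linear_on p (Rp0 p hh) T"
    and "1 \<le> N" and "N < M"
    and "B \<subseteq> dyadic_level N"
  defines "q \<equiv> p / (p - 1)"
    and "Z \<equiv> (\<lambda>\<theta>. pairing (\<lambda>x. \<Sum>K\<in>B. \<theta> K * hh M K x)
                       (T (\<lambda>x. \<Sum>K\<in>B. \<theta> K * hh M K x)) - (\<Sum>K\<in>B. pairing (hh M K) (T (hh M K))))"
  shows "sign_avg B Z = 0 \<and>
         sign_var B Z \<le> 2 * (op_norm p (Rp0 p hh) T)\<^sup>2
            * measure lborel (\<Union>K\<in>B. dyint K) powr (1 / p + 1) * 2 powr (- real N / q)"
proof -
  interpret haar_block p hh T M N B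
    using assms(1-3,5,6) by unfold_locales
  have "Z \<theta> = pairing (hh_sum B \<theta>) (T (hh_sum B \<theta>)) - (\<Sum>K\<in>B. hh_entry K K)" for \<theta>
    unfolding Z_def hh_sum_def hh_entry_def ..
  then have "Z = (\<lambda>\<theta>. (\<Sum>K\<in>B. \<Sum>L\<in>B. \<theta> K * \<theta> L * hh_entry K L) - (\<Sum>K\<in>B. hh_entry K K))"
    by (intro ext) (simp add: pairing_hh_sum_T_hh_sum)
  then have "sign_avg B Z = 0" and "sign_var B Z \<le> 2 * (\<Sum>K\<in>B. \<Sum>L\<in>B. (hh_entry K L)\<^sup>2)"
    using sign_avg_var_quadratic_form[OF finite_B, of hh_entry] by simp_all
  with sum_hh_entry_squares_le measure_UN_dyint[OF assms(6)] show ?thesis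
    unfolding q_def by (simp add: mult_ac)
qed

end
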